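(* Assume the regularity estimate $t\|u'(t)\|+t^2\|u''(t)\|+t^3\|u'''(t)\|\le Ct^\sigma$ ($t>0$) holds for some $\sigma>0$, and the time mesh is $t_n=(n\tau)^\gamma$ with $\gamma\ge1$. Then for $1\le n\le N$, with $\delta=\sigma-2/\gamma$, \[ \|\psi^n\|\le\|\psi\|_{I_n}\le C\times\begin{cases}\tau^2\log(t_n/t_1),&\text{if }\gamma=2/\sigma,\\ \tau^{\min(\gamma\sigma,2)}t_n^{\max(0,\delta)},&\text{if }\gamma\ne2/\sigma,\end{cases} \] where $\|\psi\|_{I_n}=\sup_{t\in I_n}\|\psi(t)\|$.
   Context: $\Omega\subset\mathbb{R}^d$ ($d\le3$) convex polyhedron, $0<\alpha<1$, $\kappa\in W^{1,\infty}(\Omega)$, $\kappa\ge\kappa_{\min}>0$, $\mathcal{A}w=-\nabla\cdot(\kappa\nabla w)$; $u$ solves $\partial_t^\alpha u+\mathcal{A}u=f$ on $\Omega\times(0,T]$ with $u=0$ on $\partial\Omega$, $u(0)=u_0$ (Caputo derivative $\partial_t^\alpha v(t)=\int_0^t\frac{(t-s)^{-\alpha}}{\Gamma(1-\alpha)}v'(s)\,ds$). $\|\cdot\|$ is the $L^2(\Omega)$ norm. Time mesh $t_n=(n\tau)^\gamma$, $0\le n\le N$, $\tau=T^{1/\gamma}/N$, $\tau_n=t_n-t_{n-1}$, $I_n=(t_{n-1},t_n)$. $\widehat u$ is continuous on $[0,T]$, linear on each $\overline{I_n}$, $\widehat u(0)=u_0$, $\int_{I_n}\widehat u\,dt=\int_{I_n}u\,dt$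 for $1\le n\le N$; $\psi=u-\widehat u$, $\psi^n=\psi(t_n)$. $C$ is a generic constant, bounded for $0<\alpha\le1$, independent of $N,\tau$. *)

theory Defs
  imports "HOL-Analysis.Analysis"
begin

definition tstep :: "real \<Rightarrow> real \<Rightarrow> nat \<Rightarrow> real" where
  "tstep T \<gamma> N = T powr (1 / \<gamma>) / real N"

definition mesh :: "real \<Rightarrow> real \<Rightarrow> nat \<Rightarrow> nat \<Rightarrow> real" where
  "mesh T \<gamma> N n = (real n * tstep T \<gamma> N) powr \<gamma>"

definition is_avg_interp ::
  "(real \<Rightarrow> 'a::real_normed_vector) \<Rightarrow> (nat \<Rightarrow> real) \<Rightarrow> nat \<Rightarrow> (real \<Rightarrow> 'a) \<Rightarrow> bool" where
  "is_avg_interp u t N uh \<longleftrightarrow>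
     continuous_on {0 .. t N} uh \<and>
     uh 0 = u 0 \<and>
     (\<forall>n\<in>{1..N}. \<forall>s\<in>{t (n-1) .. t n}.
        uh s = ((t n - s) / (t n - t (n-1))) *\<^sub>R uh (t (n-1))
             + ((s - t (n-1)) / (t n - t (n-1))) *\<^sub>R uh (t n)) \<and>
     (\<forall>n\<in>{1..N}. integral {t (n-1) .. t n} uh = integral {t (n-1) .. t n} u)"

end

theory Submission
  imports Defs
begin

(* Write h_j = t_j - t_(j-1) and e_j = psi^j. Because the interpolant is linear on I_j and has the
   same mean as u there, e_j + e_(j-1) is twice the error of the trapezoidal rule for u on I_j. By
   Taylor's theorem that error is h_j^2 u''(t_(j-1)) / 12 up to O(h_j^3 |u'''|) for j >= 2. After
   subtracting this leading term, the alternating recursion telescopes, so |e_n| is bounded by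
   the sum over j of the increments of the leading term and of the remainders. On the graded mesh
   (h_j <= gamma t_j / j, with t_j / t_(j-1) bounded) each summand is O(tau^(gamma sigma) j^(gamma sigma - 3)),
   and summing gives tau^(gamma sigma) times n^(gamma sigma - 2), 1 + log n or 1, according to the
   sign of gamma sigma - 2. On I_1 only u' is controlled, and |u t - u 0| <= M t^sigma / sigma takes
   the place of Taylor's theorem. Inside I_n, psi is the interpolation error of u plus a convex
   combination of e_(n-1) and e_n; by continuity |e_n| is at most the supremum over I_n. *)

section \<open>Vector-valued calculus on an interval\<close>

lemma vector_mean_value_bound:
  fixes f :: "real \<Rightarrow> 'a::real_normed_vector"
  assumes "\<And>s. s \<in> {lo..hi} \<Longrightarrow> (f has_vector_derivative f' s) (at s within {lo..hi})"
    and "\<And>s. s \<in> {lo..hi} \<Longrightarrow> norm (f' s) \<le> B"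
    and "x \<in> {lo..hi}" "y \<in> {lo..hi}"
  shows "norm (f x - f y) \<le> B * \<bar>x - y\<bar>"
proof -
  have "norm (f x - f y) \<le> B * norm (x - y)"
  proof (rule differentiable_bound[where f'="\<lambda>s h. h *\<^sub>R f' s"])
    show "(f has_derivative (\<lambda>h. h *\<^sub>R f' s)) (at s within {lo..hi})" if "s \<in> {lo..hi}" for s
      using assms(1)[OF that] by (simp add: has_vector_derivative_def)
    show "onorm (\<lambda>h. h *\<^sub>R f' s) \<le> B" if "s \<in> {lo..hi}" for s
      using assms(2)[OF that] onorm_scaleR_left[OF bounded_linear_ident, of "f' s"]
      by (simp add: onorm_id)
  qed (use assms in auto)
  then show ?thesis by simp
qed

lemma has_vector_derivative_scaleR_const:
  assumes "(g has_real_derivative g') (at x within S)"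
  shows "((\<lambda>y. g y *\<^sub>R v) has_vector_derivative (g' *\<^sub>R v)) (at x within S)"
  using has_vector_derivative_scaleR[OF assms has_vector_derivative_const[of v]] by simp

lemma taylor_order2_remainder:
  fixes f :: "real \<Rightarrow> 'a::real_normed_vector"
  assumes d1: "\<And>s. s \<in> {lo..hi} \<Longrightarrow> (f has_vector_derivative f1 s) (at s within {lo..hi})"
    and d2: "\<And>s. s \<in> {lo..hi} \<Longrightarrow> (f1 has_vector_derivative f2 s) (at s within {lo..hi})"
    and bound: "\<And>s. s \<in> {lo..hi} \<Longrightarrow> norm (f2 s) \<le> K"
    and a: "a \<in> {lo..hi}" and x: "x \<in> {lo..hi}"
  shows "norm (f x - f a - (x - a) *\<^sub>R f1 a) \<le> K * (x - a)\<^sup>2"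
proof -
  let ?S = "{min a x..max a x}"
  have sub: "?S \<subseteq> {lo..hi}" using a x by auto
  have "norm (f x - f a - (x - a) *\<^sub>R f1 a) \<le> norm (x - a) * (K * \<bar>x - a\<bar>)"
  proof (rule vector_differentiable_bound_linearization)
    show "(f has_vector_derivative f1 s) (at s within ?S)" if "s \<in> ?S" for s
      using has_vector_derivative_within_subset[OF d1 sub] that sub by blast
    show "norm (f1 s - f1 a) \<le> K * \<bar>x - a\<bar>" if "s \<in> ?S" for s
    proof -
      have "norm (f1 s - f1 a) \<le> K * \<bar>s - a\<bar>"
        using vector_mean_value_bound[OF d2 bound] that sub a by blast
      also have "\<dots> \<le> K * \<bar>x - a\<bar>"
        using that order_trans[OF norm_ge_zero bound[OF a]] by (intro mult_left_mono) auto
      finally show ?thesis .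
    qed
  qed (auto simp: closed_segment_eq_real_ivl)
  then show ?thesis by (simp add: power2_eq_square mult_ac)
qed

lemma taylor_order3_remainder:
  fixes f :: "real \<Rightarrow> 'a::real_normed_vector"
  assumes d1: "\<And>s. s \<in> {lo..hi} \<Longrightarrow> (f has_vector_derivative f1 s) (at s within {lo..hi})"
    and d2: "\<And>s. s \<in> {lo..hi} \<Longrightarrow> (f1 has_vector_derivative f2 s) (at s within {lo..hi})"
    and d3: "\<And>s. s \<in> {lo..hi} \<Longrightarrow> (f2 has_vector_derivative f3 s) (at s within {lo..hi})"
    and bound: "\<And>s. s \<in> {lo..hi} \<Longrightarrow> norm (f3 s) \<le> K"
    and a: "a \<in> {lo..hi}" and x: "x \<in> {lo..hi}"
  shows "norm (f x - f a - (x - a) *\<^sub>R f1 a - ((x - a)\<^sup>2 / 2) *\<^sub>R f2 a) \<le> K * \<bar>x - a\<bar> ^ 3"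
proof -
  let ?S = "{min a x..max a x}"
  have sub: "?S \<subseteq> {lo..hi}" using a x by auto
  let ?g = "\<lambda>y. f y - ((y - a)\<^sup>2 / 2) *\<^sub>R f2 a"
  let ?g' = "\<lambda>y. f1 y - (y - a) *\<^sub>R f2 a"
  have "norm (?g x - ?g a - (x - a) *\<^sub>R ?g' a) \<le> norm (x - a) * (K * (x - a)\<^sup>2)"
  proof (rule vector_differentiable_bound_linearization[where f = ?g and f' = ?g' and S = ?S])
    show "(?g has_vector_derivative ?g' s) (at s within ?S)" if "s \<in> ?S" for s
    proof -
      have "(f has_vector_derivative f1 s) (at s within ?S)"
        using has_vector_derivative_within_subset[OF d1 sub] that sub by blast
      moreover have "((\<lambda>y. (y - a)\<^sup>2 / 2) has_real_derivative (s - a)) (at s within ?S)"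
        by (auto intro!: derivative_eq_intros)
      ultimately show ?thesis
        by (intro has_vector_derivative_diff has_vector_derivative_scaleR_const)
    qed
    show "norm (?g' s - ?g' a) \<le> K * (x - a)\<^sup>2" if "s \<in> ?S" for s
    proof -
      have "norm (?g' s - ?g' a) \<le> K * (s - a)\<^sup>2"
        using taylor_order2_remainder[OF d2 d3 bound a, of s] subsetD[OF sub that]
        by (simp add: algebra_simps)
      also have "\<dots> \<le> K * (x - a)\<^sup>2"
        using that order_trans[OF norm_ge_zero bound[OF a]]
        by (intro mult_left_mono) (auto simp: abs_le_square_iff[symmetric])
      finally show ?thesis .
    qed
  qed (auto simp: closed_segment_eq_real_ivl)
  then show ?thesis by (simp add: power2_eq_square power3_eq_cube abs_mult mult_ac algebra_simps)
qed

lemma norm_convex_comb_le_max: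
  fixes x y :: "'a::real_normed_vector"
  assumes "0 \<le> l" "0 \<le> m" "l + m = 1"
  shows "norm (l *\<^sub>R x + m *\<^sub>R y) \<le> max (norm x) (norm y)"
proof -
  have "norm (l *\<^sub>R x + m *\<^sub>R y) \<le> l * norm x + m * norm y"
    by (rule order_trans[OF norm_triangle_ineq]) (simp add: assms)
  also have "\<dots> \<le> l * max (norm x) (norm y) + m * max (norm x) (norm y)"
    using assms by (intro add_mono mult_left_mono) auto
  finally show ?thesis using assms(3) by (simp add: algebra_simps flip: distrib_right)
qed

lemma interval_weights:
  fixes a b s :: real
  assumes "a < b" "s \<in> {a..b}"
  shows "0 \<le> (b - s) / (b - a)" "0 \<le> (s - a) / (b - a)" "(b - s) / (b - a) + (s - a) / (b - a) = 1"
proof -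
  show "0 \<le> (b - s) / (b - a)" "0 \<le> (s - a) / (b - a)" using assms by (auto intro!: divide_nonneg_pos)
  have "(b - s) / (b - a) + (s - a) / (b - a) = ((b - s) + (s - a)) / (b - a)"
    by (rule add_divide_distrib[symmetric])
  then show "(b - s) / (b - a) + (s - a) / (b - a) = 1" using assms by simp
qed

lemma linear_interpolation_error_le:
  fixes f :: "real \<Rightarrow> 'a::real_normed_vector"
  assumes ab: "a < b" and s: "s \<in> {a..b}"
    and d1: "\<And>x. x \<in> {a..b} \<Longrightarrow> (f has_vector_derivative f1 x) (at x within {a..b})"
    and d2: "\<And>x. x \<in> {a..b} \<Longrightarrow> (f1 has_vector_derivative f2 x) (at x within {a..b})"
    and bound: "\<And>x. x \<in> {a..b} \<Longrightarrow> norm (f2 x) \<le> K"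
  shows "norm (f s - (((b - s) / (b - a)) *\<^sub>R f a + ((s - a) / (b - a)) *\<^sub>R f b)) \<le> K * (b - a)\<^sup>2"
proof -
  define l m where "l = (b - s) / (b - a)" and "m = (s - a) / (b - a)"
  have lm: "0 \<le> l" "0 \<le> m" "l + m = 1" using interval_weights[OF ab s] by (simp_all add: l_def m_def)
  have "- (l *\<^sub>R (f a - f s - (a - s) *\<^sub>R f1 s) + m *\<^sub>R (f b - f s - (b - s) *\<^sub>R f1 s))
      = (l + m) *\<^sub>R f s - (l *\<^sub>R f a + m *\<^sub>R f b) + (l * (a - s) + m * (b - s)) *\<^sub>R f1 s"
    by (simp add: algebra_simps)
  moreover have "l * (a - s) + m * (b - s) = 0" using ab by (simp add: l_def m_def field_simps)
  ultimately have "f s - (l *\<^sub>R f a + m *\<^sub>R f b)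
      = - (l *\<^sub>R (f a - f s - (a - s) *\<^sub>R f1 s) + m *\<^sub>R (f b - f s - (b - s) *\<^sub>R f1 s))"
    using lm(3) by simp
  then have "norm (f s - (l *\<^sub>R f a + m *\<^sub>R f b))
      \<le> max (norm (f a - f s - (a - s) *\<^sub>R f1 s)) (norm (f b - f s - (b - s) *\<^sub>R f1 s))"
    using norm_convex_comb_le_max[OF lm] by (simp only: norm_minus_cancel)
  also have "\<dots> \<le> K * (b - a)\<^sup>2"
  proof -
    have K: "0 \<le> K" using order_trans[OF norm_ge_zero bound[OF s]] .
    have "norm (f x - f s - (x - s) *\<^sub>R f1 s) \<le> K * (b - a)\<^sup>2" if x: "x \<in> {a..b}" for x
    proof -
      have "norm (f x - f s - (x - s) *\<^sub>R f1 s) \<le> K * (x - s)\<^sup>2"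
        by (rule taylor_order2_remainder[OF d1 d2 bound s x])
      also have "\<dots> \<le> K * (b - a)\<^sup>2"
        using K x s by (intro mult_left_mono) (auto simp: abs_le_square_iff[symmetric])
      finally show ?thesis .
    qed
    then show ?thesis using ab by simp
  qed
  finally show ?thesis by (simp add: l_def m_def)
qed

section \<open>Integration in complete normed spaces\<close>

lemma norm_diff_triangle_le3:
  fixes x y z w :: "'a::real_normed_vector"
  shows "norm (x - w) \<le> norm (x - y) + norm (y - z) + norm (w - z)"
  using norm_triangle_ineq4[of "(x - y) + (y - z)" "w - z"] norm_triangle_ineq[of "x - y" "y - z"]
  by simp

(* HOL-Analysis proves integrable_uniform_limit and integrable_continuous_real only for sort banach,
   which a type of sort {real_normed_vector, complete_space} does not inherit, hence the next three lemmas. *)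

lemma integrable_uniform_approx:
  fixes f :: "real \<Rightarrow> 'a::{real_normed_vector, complete_space}"
  assumes approx: "\<And>\<epsilon>. \<epsilon> > 0 \<Longrightarrow> \<exists>g. (\<forall>x\<in>{a..b}. norm (f x - g x) \<le> \<epsilon>) \<and> g integrable_on {a..b}"
  shows "f integrable_on {a..b}"
proof -
  let ?rsum = "\<lambda>h D. \<Sum>(x,K)\<in>D. measure lborel K *\<^sub>R h x"
  have "f integrable_on cbox a b"
  proof (subst integrable_Cauchy, intro allI impI)
    fix e :: real assume e: "e > 0"
    define c where "c = measure lborel (cbox a b)"
    define \<epsilon> where "\<epsilon> = e / (4 * (c + 1))"
    have "c \<ge> 0" by (simp add: c_def)
    then have \<epsilon>: "\<epsilon> > 0" "\<epsilon> * c \<le> e / 4"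
      using e by (simp_all add: \<epsilon>_def field_simps)
    obtain g where fg: "\<forall>x\<in>cbox a b. norm (f x - g x) \<le> \<epsilon>" and "g integrable_on cbox a b"
      using approx[OF \<epsilon>(1)] by auto
    then obtain \<gamma> where \<gamma>: "gauge \<gamma>" and
      g_Cauchy: "\<And>D1 D2. D1 tagged_division_of cbox a b \<Longrightarrow> \<gamma> fine D1 \<Longrightarrow>
            D2 tagged_division_of cbox a b \<Longrightarrow> \<gamma> fine D2 \<Longrightarrow> norm (?rsum g D1 - ?rsum g D2) < e / 2"
      unfolding integrable_Cauchy using e by (meson half_gt_zero)
    have close: "norm (?rsum f D1 - ?rsum f D2) < e"
      if "D1 tagged_division_of cbox a b" "\<gamma> fine D1" "D2 tagged_division_of cbox a b" "\<gamma> fine D2"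
      for D1 D2
    proof -
      have "norm (?rsum f D1 - ?rsum f D2)
          \<le> norm (?rsum f D1 - ?rsum g D1) + norm (?rsum g D1 - ?rsum g D2) + norm (?rsum f D2 - ?rsum g D2)"
        by (rule norm_diff_triangle_le3)
      also have "\<dots> < e / 4 + e / 2 + e / 4"
        using order_trans[OF rsum_diff_bound[OF that(1) fg] \<epsilon>(2)[unfolded c_def]]
          order_trans[OF rsum_diff_bound[OF that(3) fg] \<epsilon>(2)[unfolded c_def]] g_Cauchy[OF that]
        by (intro add_le_less_mono add_less_le_mono)
      finally show ?thesis by simp
    qed
    show "\<exists>\<gamma>. gauge \<gamma> \<and> (\<forall>D1 D2. D1 tagged_division_of cbox a b \<and> \<gamma> fine D1 \<and>
            D2 tagged_division_of cbox a b \<and> \<gamma> fine D2 \<longrightarrow> norm (?rsum f D1 - ?rsum f D2) < e)"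
      using \<gamma> close by (intro exI[of _ \<gamma>]) auto
  qed
  then show ?thesis by simp
qed

lemma uniform_step_approx_extend:
  fixes f g :: "real \<Rightarrow> 'a::real_normed_vector"
  assumes "a \<le> x" "x < x'"
    and approx: "\<forall>y\<in>{a..x}. norm (f y - g y) \<le> \<epsilon>" and "g integrable_on {a..x}"
    and near: "\<forall>y\<in>{x..x'}. norm (f y - f x') \<le> \<epsilon>"
  shows "\<exists>g'. (\<forall>y\<in>{a..x'}. norm (f y - g' y) \<le> \<epsilon>) \<and> g' integrable_on {a..x'}"
proof -
  define g' where "g' y = (if y \<le> x then g y else f x')" for y
  have left: "cbox a x' \<inter> {y. y \<bullet> 1 \<le> x} = {a..x}" and right: "cbox a x' \<inter> {y. y \<bullet> 1 \<ge> x} = {x..x'}"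
    using assms(1,2) by auto
  obtain i where "(g has_integral i) {a..x}" using assms(4) by blast
  then have i: "(g' has_integral i) {a..x}"
    by (rule has_integral_eq[rotated]) (simp add: g'_def)
  have "((\<lambda>y. f x') has_integral (measure lborel {x..x'} *\<^sub>R f x')) {x..x'}"
    by (rule has_integral_const_real)
  then have j: "(g' has_integral (measure lborel {x..x'} *\<^sub>R f x')) {x..x'}"
    by (rule has_integral_spike_finite[where S = "{x}", rotated 2]) (auto simp: g'_def)
  have "(g' has_integral (i + measure lborel {x..x'} *\<^sub>R f x')) (cbox a x')"
    by (rule has_integral_split[where k = 1 and c = x]) (use i j left right in simp_all)
  moreover have "\<forall>y\<in>{a..x'}. norm (f y - g' y) \<le> \<epsilon>"
    using approx near by (auto simp: g'_def)
  ultimately show ?thesis by auto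
qed

lemma integrable_continuous_real_complete:
  fixes f :: "real \<Rightarrow> 'a::{real_normed_vector, complete_space}"
  assumes cont: "continuous_on {a..b} f" and ab: "a \<le> b"
  shows "f integrable_on {a..b}"
proof (rule integrable_uniform_approx)
  fix \<epsilon> :: real assume \<epsilon>: "\<epsilon> > 0"
  obtain \<delta> where \<delta>: "\<delta> > 0" and
    uc: "\<And>y y'. y \<in> {a..b} \<Longrightarrow> y' \<in> {a..b} \<Longrightarrow> dist y' y < \<delta> \<Longrightarrow> dist (f y') (f y) < \<epsilon>"
    using compact_uniformly_continuous[OF cont compact_Icc] \<epsilon>
    unfolding uniformly_continuous_on_def by metis
  define x where "x k = min (a + real k * (\<delta> / 2)) b" for k
  have x: "a \<le> x k" "x k \<le> b" for k
    using ab \<delta> by (auto simp: x_def)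
  have x_step: "x k \<le> x (Suc k)" "x (Suc k) \<le> x k + \<delta> / 2" for k
  proof -
    have "x (Suc k) = min (a + real k * (\<delta> / 2) + \<delta> / 2) b"
      unfolding x_def by (rule arg_cong[where f = "\<lambda>y. min y b"]) (simp add: field_simps)
    then show "x k \<le> x (Suc k)" "x (Suc k) \<le> x k + \<delta> / 2"
      using \<delta> unfolding x_def by linarith+
  qed
  have "\<exists>g. (\<forall>y\<in>{a..x k}. norm (f y - g y) \<le> \<epsilon>) \<and> g integrable_on {a..x k}" for k
  proof (induction k)
    case 0
    have "x 0 = a" using ab by (simp add: x_def)
    then show ?case using \<epsilon> integrable_const_ivl[of "f a" a a] by (intro exI[of _ "\<lambda>y. f a"]) simp
  next
    case (Suc k)
    then obtain g where "\<forall>y\<in>{a..x k}. norm (f y - g y) \<le> \<epsilon>" "g integrable_on {a..x k}"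
      by blast
    moreover have "\<forall>y\<in>{x k..x (Suc k)}. norm (f y - f (x (Suc k))) \<le> \<epsilon>"
    proof
      fix y assume "y \<in> {x k..x (Suc k)}"
      with x[of k] x[of "Suc k"] x_step[of k] \<delta> have "y \<in> {a..b}" "dist y (x (Suc k)) < \<delta>"
        by (auto simp: dist_real_def)
      with uc[of "x (Suc k)" y] x[of "Suc k"] show "norm (f y - f (x (Suc k))) \<le> \<epsilon>"
        by (simp add: dist_norm)
    qed
    ultimately show ?case
      using uniform_step_approx_extend[of a "x k" "x (Suc k)" f g \<epsilon>] x(1)[of k] x_step(1)[of k]
      by (cases "x k < x (Suc k)") auto
  qed
  moreover obtain k where "(b - a) / (\<delta> / 2) < real k"
    using reals_Archimedean2 by blast
  then have "x k = b" using \<delta> by (simp add: x_def field_simps)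
  ultimately show "\<exists>g. (\<forall>y\<in>{a..b}. norm (f y - g y) \<le> \<epsilon>) \<and> g integrable_on {a..b}"
    by metis
qed

lemma has_integral_linear_interpolant:
  fixes A B :: "'a::real_normed_vector"
  assumes ab: "a < b"
  shows "((\<lambda>s. ((b - s) / (b - a)) *\<^sub>R A + ((s - a) / (b - a)) *\<^sub>R B)
           has_integral ((b - a) / 2) *\<^sub>R (A + B)) {a..b}"
proof -
  define d where "d = b - a"
  have d: "d > 0" using ab by (simp add: d_def)
  define F where "F s = (- ((b - s)\<^sup>2 / (2 * d))) *\<^sub>R A + ((s - a)\<^sup>2 / (2 * d)) *\<^sub>R B" for s
  have F': "(F has_vector_derivative ((b - s) / d) *\<^sub>R A + ((s - a) / d) *\<^sub>R B) (at s)" for s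
  proof -
    have "((\<lambda>s. - ((b - s)\<^sup>2 / (2 * d))) has_real_derivative ((b - s) / d)) (at s)"
         "((\<lambda>s. (s - a)\<^sup>2 / (2 * d)) has_real_derivative ((s - a) / d)) (at s)"
      using d by (auto intro!: derivative_eq_intros simp: field_simps)
    then show ?thesis
      unfolding F_def by (intro has_vector_derivative_add has_vector_derivative_scaleR_const)
  qed
  have "continuous_on {a..b} F"
    by (rule continuous_on_vector_derivative, rule has_vector_derivative_at_within, rule F')
  then have "((\<lambda>s. ((b - s) / d) *\<^sub>R A + ((s - a) / d) *\<^sub>R B) has_integral (F b - F a)) {a..b}"
    using ab F' by (intro fundamental_theorem_of_calculus_interior) auto
  moreover have "F b - F a = (d / 2) *\<^sub>R (A + B)"
    using d by (simp add: F_def power2_eq_square scaleR_add_right d_def[symmetric])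
  ultimately show ?thesis by (simp add: d_def)
qed

lemma norm_minus_average_le:
  fixes f :: "real \<Rightarrow> 'a::{real_normed_vector, complete_space}"
  assumes ab: "a < b" and cont: "continuous_on {a..b} f"
    and bound: "\<And>x. x \<in> {a..b} \<Longrightarrow> norm (v - f x) \<le> B"
  shows "norm (v - (1 / (b - a)) *\<^sub>R integral {a..b} f) \<le> B"
proof -
  have B: "0 \<le> B" using bound[of a] ab by (meson atLeastAtMost_iff less_imp_le norm_ge_zero order_refl order_trans)
  have "(f has_integral integral {a..b} f) {a..b}"
    using integrable_continuous_real_complete[OF cont] ab by (simp add: integrable_integral)
  then have "((\<lambda>x. v - f x) has_integral ((b - a) *\<^sub>R v - integral {a..b} f)) {a..b}"
    using has_integral_diff[OF has_integral_const_real[of v a b]] ab by simp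
  from has_integral_bound_real[OF B _ this, of "{}"] bound ab
  have "norm ((b - a) *\<^sub>R v - integral {a..b} f) \<le> B * (b - a)" by simp
  moreover have "v - (1 / (b - a)) *\<^sub>R integral {a..b} f = (1 / (b - a)) *\<^sub>R ((b - a) *\<^sub>R v - integral {a..b} f)"
    using ab by (simp add: scaleR_diff_right)
  ultimately show ?thesis using ab by (simp add: divide_simps)
qed

lemma trapezoid_error_expansion:
  fixes f :: "real \<Rightarrow> 'a::{real_normed_vector, complete_space}"
  assumes ab: "a < b"
    and d1: "\<And>s. s \<in> {a..b} \<Longrightarrow> (f has_vector_derivative f1 s) (at s within {a..b})"
    and d2: "\<And>s. s \<in> {a..b} \<Longrightarrow> (f1 has_vector_derivative f2 s) (at s within {a..b})"
    and d3: "\<And>s. s \<in> {a..b} \<Longrightarrow> (f2 has_vector_derivative f3 s) (at s within {a..b})"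
    and bound: "\<And>s. s \<in> {a..b} \<Longrightarrow> norm (f3 s) \<le> K"
  shows "norm ((1 / 2) *\<^sub>R (f a + f b) - (1 / (b - a)) *\<^sub>R integral {a..b} f - ((b - a)\<^sup>2 / 12) *\<^sub>R f2 a)
           \<le> 3 / 2 * K * (b - a) ^ 3"
proof -
  define h where "h = b - a"
  have h: "h > 0" using ab by (simp add: h_def)
  have K: "0 \<le> K" using order_trans[OF norm_ge_zero bound[of a]] ab by simp
  define P where "P y = f a + (y - a) *\<^sub>R f1 a + ((y - a)\<^sup>2 / 2) *\<^sub>R f2 a" for y
  define Q where "Q y = (y - a) *\<^sub>R f a + ((y - a)\<^sup>2 / 2) *\<^sub>R f1 a + ((y - a) ^ 3 / 6) *\<^sub>R f2 a" for y
  have remainder: "norm (f y - P y) \<le> K * h ^ 3" if "y \<in> {a..b}" for y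
  proof -
    have "norm (f y - P y) \<le> K * \<bar>y - a\<bar> ^ 3"
      using taylor_order3_remainder[OF d1 d2 d3 bound, of a y] that ab by (simp add: P_def diff_diff_eq)
    also have "\<dots> \<le> K * h ^ 3"
      using that K by (auto intro!: mult_left_mono power_mono simp: h_def)
    finally show ?thesis .
  qed
  have Q': "(Q has_vector_derivative P y) (at y)" for y
  proof -
    have "((\<lambda>y. y - a) has_real_derivative 1) (at y)"
         "((\<lambda>y. (y - a)\<^sup>2 / 2) has_real_derivative (y - a)) (at y)"
         "((\<lambda>y. (y - a) ^ 3 / 6) has_real_derivative ((y - a)\<^sup>2 / 2)) (at y)"
      by (auto intro!: derivative_eq_intros)
    then have "(Q has_vector_derivative (1 *\<^sub>R f a + (y - a) *\<^sub>R f1 a + ((y - a)\<^sup>2 / 2) *\<^sub>R f2 a)) (at y)"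
      unfolding Q_def by (intro has_vector_derivative_add has_vector_derivative_scaleR_const)
    then show ?thesis by (simp add: P_def)
  qed
  have "continuous_on {a..b} Q"
    by (rule continuous_on_vector_derivative, rule has_vector_derivative_at_within, rule Q')
  then have P_int: "(P has_integral (Q b - Q a)) {a..b}"
    using ab Q' by (intro fundamental_theorem_of_calculus_interior) auto
  have f_int: "(f has_integral integral {a..b} f) {a..b}"
    using integrable_continuous_real_complete[OF continuous_on_vector_derivative[OF d1]] ab
    by (simp add: integrable_integral)
  have "Q a = 0" by (simp add: Q_def)
  then have err_int: "((\<lambda>y. f y - P y) has_integral (integral {a..b} f - Q b)) {a..b}"
    using has_integral_diff[OF f_int P_int] by simp
  have E: "norm (integral {a..b} f - Q b) \<le> K * h ^ 3 * h"
    using has_integral_bound_real[where S = "{}", OF _ _ err_int, of "K * h ^ 3"] remainder K ab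
    by (simp add: h_def)
  have "(1 / 2) *\<^sub>R (f a + f b) - (1 / (b - a)) *\<^sub>R integral {a..b} f - ((b - a)\<^sup>2 / 12) *\<^sub>R f2 a
      = (1 / 2) *\<^sub>R (f b - P b) - (1 / h) *\<^sub>R (integral {a..b} f - Q b)"
    using h by (simp add: P_def Q_def h_def[symmetric] algebra_simps power2_eq_square power3_eq_cube
        flip: scaleR_add_left scaleR_diff_left)
  also have "norm \<dots> \<le> (1 / 2) * (K * h ^ 3) + (1 / h) * (K * h ^ 3 * h)"
    using remainder[of b] ab E h
    by (intro order_trans[OF norm_triangle_ineq4] add_mono) (auto intro!: mult_left_mono simp: pos_divide_le_eq)
  also have "\<dots> = 3 / 2 * K * (b - a) ^ 3" using h by (simp add: field_simps h_def)
  finally show ?thesis .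
qed

section \<open>Powers and power sums\<close>

lemma powr_le_scale_powr:
  fixes y s x D q :: real
  assumes y: "0 < y" and s: "s \<in> {y..D * y}" and x: "x \<in> {y..D * y}"
  shows "s powr q \<le> D powr \<bar>q\<bar> * x powr q"
proof -
  have "1 * y \<le> D * y" using s by simp
  then have D: "1 \<le> D" using y by (simp only: mult_le_cancel_right_pos)
  show ?thesis
  proof (cases "q \<ge> 0")
    case True
    have "s powr q \<le> (D * y) powr q" using y s True by (auto intro: powr_mono2)
    also have "\<dots> \<le> D powr \<bar>q\<bar> * x powr q"
      using y x D True by (auto simp: powr_mult intro!: mult_left_mono powr_mono2)
    finally show ?thesis .
  next
    case False
    have "s powr q \<le> y powr q" using y s False by (intro powr_mono2') auto
    also have "\<dots> = D powr \<bar>q\<bar> * (D * y) powr q"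
      using y D False by (simp add: powr_mult powr_minus field_simps)
    also have "\<dots> \<le> D powr \<bar>q\<bar> * x powr q"
      using y x D False by (intro mult_left_mono powr_mono2') auto
    finally show ?thesis .
  qed
qed

lemma powr_diff_pred_le:
  fixes \<gamma> :: real
  assumes \<gamma>: "\<gamma> \<ge> 1" and j: "j \<ge> 1"
  shows "real j powr \<gamma> - real (j - 1) powr \<gamma> \<le> \<gamma> * real j powr (\<gamma> - 1)"
proof (cases "j = 1")
  case True
  then show ?thesis using \<gamma> by simp
next
  case False
  then have j2: "j \<ge> 2" using j by simp
  have "\<exists>z. real (j - 1) < z \<and> z < real j \<and>
      real j powr \<gamma> - real (j - 1) powr \<gamma> = (real j - real (j - 1)) * (\<gamma> * z powr (\<gamma> - 1))"
    using j2 by (intro MVT2) (auto intro: has_real_derivative_powr)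
  then obtain z where z: "real (j - 1) < z" "z < real j"
    and mvt: "real j powr \<gamma> - real (j - 1) powr \<gamma> = (real j - real (j - 1)) * (\<gamma> * z powr (\<gamma> - 1))"
    by blast
  have "z powr (\<gamma> - 1) \<le> real j powr (\<gamma> - 1)" using z \<gamma> j2 by (intro powr_mono2) auto
  then show ?thesis using mvt j2 \<gamma> by (simp add: of_nat_diff)
qed

lemma powr_second_difference_le:
  fixes \<gamma> :: real
  assumes \<gamma>: "\<gamma> \<ge> 1" and j: "j \<ge> 3"
  shows "\<bar>(real j powr \<gamma> - real (j - 1) powr \<gamma>) - (real (j - 1) powr \<gamma> - real (j - 2) powr \<gamma>)\<bar>
         \<le> 2 * (\<gamma> * (\<gamma> - 1) * 3 powr \<bar>\<gamma> - 2\<bar> * real j powr (\<gamma> - 2))"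
proof -
  define lo where "lo = real j - 2"
  define K where "K = \<gamma> * (\<gamma> - 1) * 3 powr \<bar>\<gamma> - 2\<bar> * real j powr (\<gamma> - 2)"
  have lo: "1 \<le> lo" using j by (simp add: lo_def)
  let ?f = "\<lambda>x::real. x powr \<gamma>"
  let ?f1 = "\<lambda>x::real. \<gamma> * x powr (\<gamma> - 1)"
  let ?f2 = "\<lambda>x::real. \<gamma> * ((\<gamma> - 1) * x powr (\<gamma> - 1 - 1))"
  have d1: "(?f has_vector_derivative ?f1 s) (at s within {lo..real j})" if "s \<in> {lo..real j}" for s
  proof -
    have "s > 0" using that lo by auto
    from has_real_derivative_powr[OF this, of \<gamma>] show ?thesis
      unfolding has_real_derivative_iff_has_vector_derivative[symmetric]
      by (rule has_field_derivative_at_within)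
  qed
  have d2: "(?f1 has_vector_derivative ?f2 s) (at s within {lo..real j})" if "s \<in> {lo..real j}" for s
  proof -
    have "s > 0" using that lo by auto
    from DERIV_cmult[OF has_real_derivative_powr[OF this, of "\<gamma> - 1"], of \<gamma>] show ?thesis
      unfolding has_real_derivative_iff_has_vector_derivative[symmetric]
      by (rule has_field_derivative_at_within)
  qed
  have K: "norm (?f2 s) \<le> K" if "s \<in> {lo..real j}" for s
  proof -
    have "s powr (\<gamma> - 2) \<le> 3 powr \<bar>\<gamma> - 2\<bar> * real j powr (\<gamma> - 2)"
      using that lo j by (intro powr_le_scale_powr[of lo]) (auto simp: lo_def)
    then have "\<gamma> * ((\<gamma> - 1) * s powr (\<gamma> - 2)) \<le> K"
      unfolding K_def using \<gamma> by (auto intro!: mult_left_mono simp: mult.assoc)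
    moreover have "0 \<le> \<gamma> * ((\<gamma> - 1) * s powr (\<gamma> - 2))" using \<gamma> by auto
    ultimately show ?thesis by (simp add: diff_diff_eq)
  qed
  have "real j - 1 \<in> {lo..real j}" "real j \<in> {lo..real j}" "real j - 2 \<in> {lo..real j}"
    by (auto simp: lo_def)
  from taylor_order2_remainder[OF d1 d2 K this(1,2)] taylor_order2_remainder[OF d1 d2 K this(1,3)]
  show ?thesis
    using j unfolding K_def[symmetric] by (simp add: of_nat_diff abs_real_def split: if_splits)
qed

lemma power_mult_powr_diff: "0 < (x::real) \<Longrightarrow> x ^ k * x powr (a - real k) = x powr a"
  by (simp add: powr_diff powr_realpow)

definition power_sum_growth :: "real \<Rightarrow> nat \<Rightarrow> real" where
  "power_sum_growth q n = (if q = 0 then 1 + ln (real n) else if q < 0 then 1 else real n powr q)"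

lemma power_sum_growth_ge_1: "n \<ge> 1 \<Longrightarrow> 1 \<le> power_sum_growth q n"
  by (auto simp: power_sum_growth_def intro: ge_one_powr_ge_zero)

lemma power_sum_growth_mono: "1 \<le> m \<Longrightarrow> m \<le> n \<Longrightarrow> power_sum_growth q m \<le> power_sum_growth q n"
  by (auto simp: power_sum_growth_def intro: powr_mono2)

lemma powr_le_power_sum_growth: "n \<ge> 1 \<Longrightarrow> real n powr q \<le> power_sum_growth q n"
  using powr_mono2'[of q 1 "real n"] by (auto simp: power_sum_growth_def)

text \<open>Comparison of the sum with the integral of \<open>x powr (q - 1)\<close>.\<close>

lemma sum_powr_le_power_sum_growth:
  fixes q :: real
  obtains C where "C \<ge> 0" "\<And>n. n \<ge> 1 \<Longrightarrow> (\<Sum>j=1..n. real j powr (q - 1)) \<le> C * power_sum_growth q n"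
proof -
  define D where "D = 2 powr \<bar>q - 1\<bar>"
  have D: "1 \<le> D" unfolding D_def by (rule ge_one_powr_ge_zero) auto
  define F where "F x = (if q = 0 then ln x else x powr q / q)" for x :: real
  have F': "DERIV F x :> x powr (q - 1)" if "x > 0" for x
  proof (cases "q = 0")
    case True
    then show ?thesis using DERIV_ln[OF that] that by (simp add: F_def[abs_def] powr_minus)
  next
    case False
    then show ?thesis
      using DERIV_cdivide[OF has_real_derivative_powr[OF that, of q], of q] by (simp add: F_def[abs_def])
  qed
  have increment: "real (Suc n) powr (q - 1) \<le> D * (F (real (Suc n)) - F (real n))" if n: "n \<ge> 1" for n :: nat
  proof -
    have "\<exists>z. real n < z \<and> z < real (Suc n) \<and>
        F (real (Suc n)) - F (real n) = (real (Suc n) - real n) * z powr (q - 1)"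
      using n by (intro MVT2) (auto intro!: F')
    then obtain z where z: "real n < z" "z < real (Suc n)" and eq: "F (real (Suc n)) - F (real n) = z powr (q - 1)"
      by auto
    have "real (Suc n) powr (q - 1) \<le> D * z powr (q - 1)"
      unfolding D_def using z n by (intro powr_le_scale_powr[of "real n"]) auto
    then show ?thesis using eq by simp
  qed
  have sum: "(\<Sum>j=1..n. real j powr (q - 1)) \<le> 1 + D * (F (real n) - F 1)" if "n \<ge> 1" for n :: nat
    using that
  proof (induction n rule: dec_induct)
    case (step m)
    then show ?case using increment[of m] by (simp add: algebra_simps)
  qed simp
  consider "q = 0" | "q < 0" | "q > 0" by linarith
  then show ?thesis
  proof cases
    case 1
    show ?thesis
    proof (rule that[of "1 + D"])
      fix n :: nat assume n: "1 \<le> n"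
      have "(\<Sum>j=1..n. real j powr (q - 1)) \<le> 1 + D * ln (real n)"
        using sum[OF n] 1 by (simp add: F_def)
      also have "\<dots> \<le> (1 + D) * (1 + ln (real n))"
        using D n by (simp add: algebra_simps)
      finally show "(\<Sum>j=1..n. real j powr (q - 1)) \<le> (1 + D) * power_sum_growth q n"
        using 1 by (simp add: power_sum_growth_def)
    qed (use D in simp)
  next
    case 2
    show ?thesis
    proof (rule that[of "1 + D / (- q)"])
      fix n :: nat assume n: "1 \<le> n"
      have "0 \<le> real n powr q" "real n powr q \<le> 1"
        using powr_mono2'[of q 1 "real n"] 2 n by auto
      then have "D * (F (real n) - F 1) \<le> D * (1 / (- q))"
        using 2 D by (intro mult_left_mono) (auto simp: F_def divide_simps)
      then show "(\<Sum>j=1..n. real j powr (q - 1)) \<le> (1 + D / (- q)) * power_sum_growth q n"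
        using sum[OF n] 2 by (simp add: power_sum_growth_def)
    qed (use D 2 in simp)
  next
    case 3
    show ?thesis
    proof (rule that[of "1 + D / q"])
      fix n :: nat assume n: "1 \<le> n"
      have "D * (F (real n) - F 1) \<le> D * (real n powr q / q)"
        using D 3 by (intro mult_left_mono) (auto simp: F_def)
      then have "(\<Sum>j=1..n. real j powr (q - 1)) \<le> 1 + D / q * real n powr q"
        using sum[OF n] by simp
      also have "\<dots> \<le> (1 + D / q) * real n powr q"
        using n 3 ge_one_powr_ge_zero[of "real n" q] by (simp add: algebra_simps)
      finally show "(\<Sum>j=1..n. real j powr (q - 1)) \<le> (1 + D / q) * power_sum_growth q n"
        using 3 by (simp add: power_sum_growth_def)
    qed (use D 3 in simp)
  qed
qed

text \<open>The recursion \<open>e\<^sub>j + e\<^sub>j\<^sub>-\<^sub>1 = 2 (w\<^sub>j + r\<^sub>j)\<close> propagates errors with alternating signs, so after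
  subtracting the leading term \<open>w\<close> only its increments and the remainders accumulate.\<close>

lemma alternating_recursion_bound:
  fixes e w r :: "nat \<Rightarrow> 'a::real_normed_vector"
  assumes "e 0 = 0" and "w 0 = 0"
    and rec: "\<And>j. 1 \<le> j \<Longrightarrow> j \<le> n \<Longrightarrow> e j + e (j - 1) = 2 *\<^sub>R (w j + r j)"
    and incr: "\<And>j. 1 \<le> j \<Longrightarrow> j \<le> n \<Longrightarrow> norm (w j - w (j - 1)) + 2 * norm (r j) \<le> \<beta> j"
  shows "norm (e n - w n) \<le> (\<Sum>j=1..n. \<beta> j)"
  using rec incr
proof (induction n)
  case 0
  then show ?case using assms(1,2) by simp
next
  case (Suc m)
  have "e (Suc m) - w (Suc m) = - (e m - w m) + (w (Suc m) - w m) + 2 *\<^sub>R r (Suc m)"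
    using Suc.prems(1)[of "Suc m"] by (simp add: algebra_simps scaleR_2)
  then have "norm (e (Suc m) - w (Suc m)) \<le> norm (- (e m - w m) + (w (Suc m) - w m)) + norm (2 *\<^sub>R r (Suc m))"
    by (simp only: norm_triangle_ineq)
  also have "\<dots> \<le> norm (e m - w m) + norm (w (Suc m) - w m) + 2 * norm (r (Suc m))"
    using norm_triangle_ineq[of "- (e m - w m)" "w (Suc m) - w m"] by (simp add: norm_minus_commute)
  also have "\<dots> \<le> (\<Sum>j=1..m. \<beta> j) + \<beta> (Suc m)"
    using Suc.IH Suc.prems Suc.prems(2)[of "Suc m"] by force
  finally show ?case by simp
qed

lemma le_at_endpoint_if_le_on_interior:
  fixes g :: "real \<Rightarrow> real"
  assumes ab: "a < b" and cont: "continuous_on {a..b} g" and le: "\<And>s. s \<in> {a<..<b} \<Longrightarrow> g s \<le> S"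
  shows "g b \<le> S"
proof -
  have "closed {x \<in> {a..b}. g x \<le> S}"
    using continuous_on_closed_Collect_le[OF cont continuous_on_const] by simp
  moreover have "{a<..<b} \<subseteq> {x \<in> {a..b}. g x \<le> S}" using le by auto
  ultimately have "closure {a<..<b} \<subseteq> {x \<in> {a..b}. g x \<le> S}" by (rule closure_minimal[rotated])
  then show ?thesis using ab by (auto dest: subsetD[of _ _ b])
qed

section \<open>Solutions with graded regularity\<close>

text \<open>Substituting \<open>s = y powr (1 / \<sigma>)\<close> turns the integrable singularity \<open>M s powr (\<sigma> - 1)\<close>
  of \<open>u'\<close> at \<open>0\<close> into the bounded derivative of \<open>y \<mapsto> u (y powr (1 / \<sigma>))\<close>.\<close>

lemma norm_diff_at_zero_le_powr:
  fixes u :: "real \<Rightarrow> 'a::real_normed_vector"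
  assumes \<sigma>: "\<sigma> > 0" and x: "0 < x" "x \<le> T" and cont: "continuous_on {0..T} u"
    and d1: "\<And>s. s \<in> {0<..T} \<Longrightarrow> (u has_vector_derivative u1 s) (at s within {0..T})"
    and bound: "\<And>s. s \<in> {0<..T} \<Longrightarrow> norm (u1 s) \<le> M * s powr (\<sigma> - 1)"
  shows "norm (u x - u 0) \<le> M / \<sigma> * x powr \<sigma>"
proof -
  define h where "h y = u (y powr (1 / \<sigma>))" for y
  define X where "X = x powr \<sigma>"
  have X: "0 < X" "X powr (1 / \<sigma>) = x" using x \<sigma> by (simp_all add: X_def powr_powr)
  have range: "y powr (1 / \<sigma>) \<in> {0..x}" if "y \<in> {0..X}" for y
    using that \<sigma> X by (auto intro: powr_mono2)
  have h_cont: "continuous_on {0..X} h"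
    unfolding h_def using \<sigma> order_trans[OF _ x(2)] range
    by (intro continuous_on_compose2[OF cont] continuous_on_powr') (auto intro!: continuous_intros)
  define h' where "h' y = ((1 / \<sigma>) * y powr (1 / \<sigma> - 1)) *\<^sub>R u1 (y powr (1 / \<sigma>))" for y
  have h': "(h has_vector_derivative h' y) (at y)" and h'_bound: "norm (h' y) \<le> M / \<sigma>"
    if y: "0 < y" "y < X" for y
  proof -
    let ?z = "y powr (1 / \<sigma>)"
    have z: "0 < ?z" "?z < x"
      using y \<sigma> X powr_less_mono2[of "1 / \<sigma>" y X] by auto
    have "at ?z within {0..T} = at ?z"
      using z x by (intro at_within_interior) auto
    then have "(u has_vector_derivative u1 ?z) (at ?z)"
      using d1[of ?z] z x by auto
    moreover have "((\<lambda>t. t powr (1 / \<sigma>)) has_vector_derivative (1 / \<sigma>) * y powr (1 / \<sigma> - 1)) (at y)"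
      using has_real_derivative_powr[of y "1 / \<sigma>"] y
      unfolding has_real_derivative_iff_has_vector_derivative by blast
    ultimately show "(h has_vector_derivative h' y) (at y)"
      using vector_diff_chain_at by (fastforce simp: h_def[abs_def] h'_def o_def)
    have "y powr (1 / \<sigma> - 1) * ?z powr (\<sigma> - 1) = y powr ((1 / \<sigma> - 1) + (1 / \<sigma>) * (\<sigma> - 1))"
      using y by (simp add: powr_powr powr_add)
    also have "(1 / \<sigma> - 1) + (1 / \<sigma>) * (\<sigma> - 1) = 0" using \<sigma> by (simp add: field_simps)
    finally have cancel: "y powr (1 / \<sigma> - 1) * ?z powr (\<sigma> - 1) = 1" using y by simp
    have "norm (h' y) = (1 / \<sigma>) * y powr (1 / \<sigma> - 1) * norm (u1 ?z)"
      using \<sigma> by (simp add: h'_def)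
    also have "\<dots> \<le> (1 / \<sigma>) * y powr (1 / \<sigma> - 1) * (M * ?z powr (\<sigma> - 1))"
      using bound[of ?z] z x \<sigma> by (intro mult_left_mono) auto
    also have "\<dots> = M / \<sigma>" using cancel by (simp add: field_simps)
    finally show "norm (h' y) \<le> M / \<sigma>" .
  qed
  have "norm (h X - h 0) \<le> M / \<sigma> * X - M / \<sigma> * 0"
  proof (rule differentiable_bound_general[where f' = h' and \<phi> = "\<lambda>y. M / \<sigma> * y" and \<phi>' = "\<lambda>_. M / \<sigma>"])
    show "((\<lambda>y. M / \<sigma> * y) has_vector_derivative M / \<sigma>) (at y)" for y
      by (auto intro!: derivative_eq_intros)
    show "continuous_on {0..X} (\<lambda>y. M / \<sigma> * y)"
      by (intro continuous_intros)
  qed (use X h_cont h' h'_bound in auto)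
  then show ?thesis using X by (simp add: h_def X_def)
qed

locale regular_solution =
  fixes u u1 u2 u3 :: "real \<Rightarrow> 'a::{real_normed_vector, complete_space}"
    and T \<sigma> \<gamma> M :: real
  assumes T: "T > 0" and \<sigma>: "\<sigma> > 0" and \<gamma>: "\<gamma> \<ge> 1"
    and cont: "continuous_on {0..T} u"
    and d1: "\<And>s. s \<in> {0<..T} \<Longrightarrow> (u has_vector_derivative u1 s) (at s within {0..T})"
    and d2: "\<And>s. s \<in> {0<..T} \<Longrightarrow> (u1 has_vector_derivative u2 s) (at s within {0..T})"
    and d3: "\<And>s. s \<in> {0<..T} \<Longrightarrow> (u2 has_vector_derivative u3 s) (at s within {0..T})"
    and reg: "\<And>s. s \<in> {0<..T} \<Longrightarrow>
               s * norm (u1 s) + s\<^sup>2 * norm (u2 s) + s ^ 3 * norm (u3 s) \<le> M * s powr \<sigma>"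
begin

definition "p = \<gamma> * \<sigma>"

lemma M_nonneg: "M \<ge> 0"
proof -
  have "0 \<le> T * norm (u1 T) + T\<^sup>2 * norm (u2 T) + T ^ 3 * norm (u3 T)" using T by auto
  also have "\<dots> \<le> M * T powr \<sigma>" using reg[of T] T by auto
  finally show ?thesis using T by (simp add: zero_le_mult_iff)
qed

lemma derivative_bounds:
  assumes s: "s \<in> {0<..T}"
  shows "norm (u1 s) \<le> M * s powr (\<sigma> - 1)"
    and "norm (u2 s) \<le> M * s powr (\<sigma> - 2)"
    and "norm (u3 s) \<le> M * s powr (\<sigma> - 3)"
proof -
  have s0: "s > 0" using s by simp
  have terms: "s * norm (u1 s) \<le> M * s powr \<sigma>" "s\<^sup>2 * norm (u2 s) \<le> M * s powr \<sigma>"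
    "s ^ 3 * norm (u3 s) \<le> M * s powr \<sigma>"
    using reg[OF s] s0 by (smt (verit) mult_nonneg_nonneg norm_ge_zero zero_le_power)+
  have scale: "M * s powr \<sigma> = s ^ k * (M * s powr (\<sigma> - real k))" for k
    using s0 by (simp add: powr_diff powr_realpow)
  show "norm (u1 s) \<le> M * s powr (\<sigma> - 1)"
    using terms(1) s0 unfolding scale[of 1] by (simp add: mult_le_cancel_left_pos)
  show "norm (u2 s) \<le> M * s powr (\<sigma> - 2)"
    using terms(2) s0 unfolding scale[of 2] by (simp add: mult_le_cancel_left_pos)
  show "norm (u3 s) \<le> M * s powr (\<sigma> - 3)"
    using terms(3) s0 unfolding scale[of 3] by (simp add: mult_le_cancel_left_pos)
qed

lemma derivatives_within_subinterval:
  assumes "0 < lo" "hi \<le> T"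
  shows "\<And>s. s \<in> {lo..hi} \<Longrightarrow> (u has_vector_derivative u1 s) (at s within {lo..hi})"
    and "\<And>s. s \<in> {lo..hi} \<Longrightarrow> (u1 has_vector_derivative u2 s) (at s within {lo..hi})"
    and "\<And>s. s \<in> {lo..hi} \<Longrightarrow> (u2 has_vector_derivative u3 s) (at s within {lo..hi})"
proof -
  have sub: "{lo..hi} \<subseteq> {0..T}" using assms by auto
  fix s assume "s \<in> {lo..hi}"
  then have s: "s \<in> {0<..T}" using assms by auto
  show "(u has_vector_derivative u1 s) (at s within {lo..hi})"
    "(u1 has_vector_derivative u2 s) (at s within {lo..hi})"
    "(u2 has_vector_derivative u3 s) (at s within {lo..hi})"
    by (rule has_vector_derivative_within_subset[OF _ sub], (rule d1 d2 d3, rule s))+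
qed

lemma norm_diff_initial_le:
  assumes "x \<in> {0..X}" "y \<in> {0..X}" "X \<le> T"
  shows "norm (u x - u y) \<le> 2 * M / \<sigma> * X powr \<sigma>"
proof -
  have from_zero: "norm (u z - u 0) \<le> M / \<sigma> * X powr \<sigma>" if z: "z \<in> {0..X}" for z
  proof (cases "z = 0")
    case True
    then show ?thesis using M_nonneg \<sigma> by simp
  next
    case False
    then have "norm (u z - u 0) \<le> M / \<sigma> * z powr \<sigma>"
      using z assms(3) derivative_bounds(1)
      by (intro norm_diff_at_zero_le_powr[OF \<sigma> _ _ cont d1]) auto
    also have "\<dots> \<le> M / \<sigma> * X powr \<sigma>"
      using M_nonneg \<sigma> z by (intro mult_left_mono powr_mono2) auto
    finally show ?thesis .
  qed
  have "norm (u x - u y) \<le> norm (u x - u 0) + norm (u y - u 0)"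
    using norm_triangle_ineq4[of "u x - u 0" "u y - u 0"] by simp
  also have "\<dots> \<le> 2 * M / \<sigma> * X powr \<sigma>" using from_zero[OF assms(1)] from_zero[OF assms(2)] by simp
  finally show ?thesis .
qed

definition "C_start = 2 * M / \<sigma>"
definition "C_u2 = M * (3 powr \<gamma>) powr \<bar>\<sigma> - 2\<bar>"
definition "C_u3 = M * (3 powr \<gamma>) powr \<bar>\<sigma> - 3\<bar>"
definition "C_mesh = 2 * (\<gamma> * (\<gamma> - 1) * 3 powr \<bar>\<gamma> - 2\<bar>)"
definition "C_lead = \<gamma>\<^sup>2 * C_u2 / 12"
definition "C_rem = 3 / 2 * C_u3 * \<gamma> ^ 3"
definition "C_lead_incr = (2 * \<gamma> * C_mesh * C_u2 + \<gamma> ^ 3 * C_u3) / 12"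
definition "C_incr = 2 * C_start + 2 * C_lead + 2 * C_rem + C_lead_incr"
definition "C_interp = C_start + C_u2 * \<gamma>\<^sup>2"
definition "C_sum = (SOME C. C \<ge> 0 \<and> (\<forall>n\<ge>1. (\<Sum>j=1..n. real j powr (p - 2 - 1)) \<le> C * power_sum_growth (p - 2) n))"
definition "C_psi = C_interp + C_incr * C_sum + C_lead"

lemma C_sum:
  "C_sum \<ge> 0" "\<And>n. n \<ge> 1 \<Longrightarrow> (\<Sum>j=1..n. real j powr (p - 2 - 1)) \<le> C_sum * power_sum_growth (p - 2) n"
proof -
  obtain C where "C \<ge> 0" "\<And>n. n \<ge> 1 \<Longrightarrow> (\<Sum>j=1..n. real j powr (p - 2 - 1)) \<le> C * power_sum_growth (p - 2) n"
    using sum_powr_le_power_sum_growth[of "p - 2"] by blast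
  then have "\<exists>C. C \<ge> 0 \<and> (\<forall>n\<ge>1. (\<Sum>j=1..n. real j powr (p - 2 - 1)) \<le> C * power_sum_growth (p - 2) n)"
    by blast
  from someI_ex[OF this] show "C_sum \<ge> 0"
    "\<And>n. n \<ge> 1 \<Longrightarrow> (\<Sum>j=1..n. real j powr (p - 2 - 1)) \<le> C_sum * power_sum_growth (p - 2) n"
    unfolding C_sum_def by auto
qed

lemma constants_nonneg:
  "C_start \<ge> 0" "C_u2 \<ge> 0" "C_u3 \<ge> 0" "C_mesh \<ge> 0" "C_lead \<ge> 0" "C_rem \<ge> 0"
  "C_lead_incr \<ge> 0" "C_incr \<ge> 0" "C_interp \<ge> 0" "C_psi \<ge> 0"
proof -
  show start: "C_start \<ge> 0" using M_nonneg \<sigma> by (simp add: C_start_def)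
  show u2: "C_u2 \<ge> 0" using M_nonneg by (simp add: C_u2_def)
  show u3: "C_u3 \<ge> 0" using M_nonneg by (simp add: C_u3_def)
  show mesh: "C_mesh \<ge> 0" using \<gamma> by (simp add: C_mesh_def)
  show lead: "C_lead \<ge> 0" using u2 by (simp add: C_lead_def)
  show rem: "C_rem \<ge> 0" using u3 \<gamma> by (simp add: C_rem_def)
  show lead_incr: "C_lead_incr \<ge> 0" using u2 u3 mesh \<gamma> by (simp add: C_lead_incr_def)
  show incr: "C_incr \<ge> 0" using start lead rem lead_incr by (simp add: C_incr_def)
  show interp: "C_interp \<ge> 0" using start u2 by (simp add: C_interp_def)
  show "C_psi \<ge> 0" using interp incr lead C_sum(1) by (simp add: C_psi_def)
qed

end

locale avg_interp_on_graded_mesh = regular_solution u u1 u2 u3 T \<sigma> \<gamma> M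
  for u u1 u2 u3 :: "real \<Rightarrow> 'a::{real_normed_vector, complete_space}" and T \<sigma> \<gamma> M +
  fixes N :: nat and uh :: "real \<Rightarrow> 'a"
  assumes N: "N \<ge> 1" and interp: "is_avg_interp u (mesh T \<gamma> N) N uh"
begin

abbreviation "\<tau> \<equiv> tstep T \<gamma> N"
abbreviation "t \<equiv> mesh T \<gamma> N"

lemma tau_pos: "\<tau> > 0"
  using T N by (simp add: tstep_def)

lemma t_eq: "t j = real j powr \<gamma> * \<tau> powr \<gamma>"
  unfolding mesh_def by (rule powr_mult)

lemma t_less: "j < k \<Longrightarrow> t j < t k"
  unfolding mesh_def using tau_pos \<gamma> by (intro powr_less_mono2) auto

lemma t_le: "j \<le> k \<Longrightarrow> t j \<le> t k"
  using t_less[of j k] by (cases "j = k") auto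

lemma t_0: "t 0 = 0"
  by (simp add: mesh_def)

lemma t_pos: "j \<ge> 1 \<Longrightarrow> t j > 0"
  using t_less[of 0 j] by (simp add: t_0)

lemma t_N: "t N = T"
  using T \<gamma> N by (simp add: mesh_def tstep_def powr_powr)

lemma t_le_T: "j \<le> N \<Longrightarrow> t j \<le> T"
  using t_le[of j N] t_N by simp

lemma t_powr_sigma_div_power: "j \<ge> 1 \<Longrightarrow> t j powr \<sigma> / real j ^ k = \<tau> powr p * real j powr (p - real k)"
  unfolding t_eq p_def using tau_pos
  by (simp add: powr_mult powr_powr powr_diff powr_realpow mult.commute)

lemma t_step_le: "1 \<le> i \<Longrightarrow> i \<le> j \<Longrightarrow> t i - t (i - 1) \<le> \<gamma> * t j / real j"
proof -
  assume i: "1 \<le> i" "i \<le> j"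
  have "t i - t (i - 1) = \<tau> powr \<gamma> * (real i powr \<gamma> - real (i - 1) powr \<gamma>)"
    by (simp add: t_eq algebra_simps)
  also have "\<dots> \<le> \<tau> powr \<gamma> * (\<gamma> * real i powr (\<gamma> - 1))"
    using powr_diff_pred_le[OF \<gamma> i(1)] by (intro mult_left_mono) auto
  also have "\<dots> \<le> \<tau> powr \<gamma> * (\<gamma> * real j powr (\<gamma> - 1))"
    using i \<gamma> by (intro mult_left_mono powr_mono2) auto
  also have "\<dots> = \<gamma> * t j / real j"
    using i by (simp add: t_eq powr_diff)
  finally show ?thesis .
qed

lemma t_second_difference_le:
  assumes j: "j \<ge> 3"
  shows "\<bar>(t j - t (j - 1)) - (t (j - 1) - t (j - 2))\<bar>
           \<le> 2 * (\<gamma> * (\<gamma> - 1) * 3 powr \<bar>\<gamma> - 2\<bar>) * t j / real j ^ 2"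
proof -
  have "(t j - t (j - 1)) - (t (j - 1) - t (j - 2)) = \<tau> powr \<gamma> *
      ((real j powr \<gamma> - real (j - 1) powr \<gamma>) - (real (j - 1) powr \<gamma> - real (j - 2) powr \<gamma>))"
    by (simp add: t_eq algebra_simps)
  then have "\<bar>(t j - t (j - 1)) - (t (j - 1) - t (j - 2))\<bar>
      \<le> \<tau> powr \<gamma> * (2 * (\<gamma> * (\<gamma> - 1) * 3 powr \<bar>\<gamma> - 2\<bar> * real j powr (\<gamma> - 2)))"
    using powr_second_difference_le[OF \<gamma> j] by (simp add: abs_mult mult_left_mono)
  also have "\<dots> = 2 * (\<gamma> * (\<gamma> - 1) * 3 powr \<bar>\<gamma> - 2\<bar>) * t j / real j ^ 2"
    using j by (simp add: t_eq powr_diff powr_realpow)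
  finally show ?thesis .
qed

lemma t_ratio_le: "1 \<le> i \<Longrightarrow> i \<le> j \<Longrightarrow> j \<le> 3 * i \<Longrightarrow> t j \<le> 3 powr \<gamma> * t i"
proof -
  assume "1 \<le> i" "i \<le> j" "j \<le> 3 * i"
  then have "t j \<le> (3 * (real i * \<tau>)) powr \<gamma>"
    unfolding mesh_def using tau_pos \<gamma> by (intro powr_mono2) auto
  then show ?thesis by (simp add: powr_mult mesh_def)
qed

definition node_error :: "nat \<Rightarrow> 'a" where
  "node_error j = u (t j) - uh (t j)"

definition trapezoid_defect :: "nat \<Rightarrow> 'a" where
  "trapezoid_defect j = (1 / 2) *\<^sub>R (u (t (j - 1)) + u (t j)) - (1 / (t j - t (j - 1))) *\<^sub>R integral {t (j - 1)..t j} u"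

lemma uh_cont: "continuous_on {0..T} uh"
  using interp[unfolded is_avg_interp_def, THEN conjunct1] t_N by simp

lemma uh_linear:
  "n \<in> {1..N} \<Longrightarrow> s \<in> {t (n - 1)..t n} \<Longrightarrow>
   uh s = ((t n - s) / (t n - t (n - 1))) *\<^sub>R uh (t (n - 1)) + ((s - t (n - 1)) / (t n - t (n - 1))) *\<^sub>R uh (t n)"
  using interp[unfolded is_avg_interp_def, THEN conjunct2, THEN conjunct2, THEN conjunct1] by blast

lemma uh_integral: "n \<in> {1..N} \<Longrightarrow> integral {t (n - 1)..t n} uh = integral {t (n - 1)..t n} u"
  using interp[unfolded is_avg_interp_def, THEN conjunct2, THEN conjunct2, THEN conjunct2] by blast

lemma node_error_0: "node_error 0 = 0"
  using interp[unfolded is_avg_interp_def, THEN conjunct2, THEN conjunct1] by (simp add: node_error_def t_0)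

text \<open>Since \<open>uh\<close> is linear on \<open>I\<^sub>n\<close> with the same mean as \<open>u\<close>, the trapezoidal defect of \<open>u\<close> equals
  the mean of the two nodal errors.\<close>

lemma node_error_recursion:
  assumes n: "n \<in> {1..N}"
  shows "node_error n + node_error (n - 1) = 2 *\<^sub>R trapezoid_defect n"
proof -
  define a b where "a = t (n - 1)" and "b = t n"
  have ab: "a < b" using n t_less[of "n - 1" n] by (auto simp: a_def b_def)
  have "integral {a..b} uh = integral {a..b} (\<lambda>s. ((b - s) / (b - a)) *\<^sub>R uh a + ((s - a) / (b - a)) *\<^sub>R uh b)"
    unfolding a_def b_def by (rule integral_cong, rule uh_linear[OF n])
  then have "integral {a..b} u = integral {a..b} (\<lambda>s. ((b - s) / (b - a)) *\<^sub>R uh a + ((s - a) / (b - a)) *\<^sub>R uh b)"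
    using uh_integral[OF n] by (simp add: a_def b_def)
  also have "\<dots> = ((b - a) / 2) *\<^sub>R (uh a + uh b)"
    by (rule integral_unique[OF has_integral_linear_interpolant[OF ab]])
  finally have "(1 / (b - a)) *\<^sub>R integral {a..b} u = (1 / 2) *\<^sub>R (uh a + uh b)"
    using ab by simp
  then have "trapezoid_defect n = (1 / 2) *\<^sub>R (u a + u b) - (1 / 2) *\<^sub>R (uh a + uh b)"
    unfolding trapezoid_defect_def a_def b_def by simp
  moreover have "node_error n + node_error (n - 1) = (u b - uh b) + (u a - uh a)"
    unfolding node_error_def a_def b_def ..
  ultimately show ?thesis by (simp add: scaleR_diff_right)
qed

lemma local_derivative_bounds:
  assumes "1 \<le> i" "i \<le> j" "j \<le> 3 * i" "j \<le> N" and s: "s \<in> {t i..t j}"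
  shows "norm (u2 s) \<le> C_u2 * t j powr (\<sigma> - 2)" and "norm (u3 s) \<le> C_u3 * t j powr (\<sigma> - 3)"
proof -
  have ti: "t i > 0" using t_pos assms by simp
  have s_range: "s \<in> {0<..T}" using s ti t_le_T[OF assms(4)] by auto
  have ratio: "t j \<le> 3 powr \<gamma> * t i" using t_ratio_le assms by simp
  have "s powr q \<le> (3 powr \<gamma>) powr \<bar>q\<bar> * t j powr q" for q
    using s ratio t_le[OF assms(2)] by (intro powr_le_scale_powr[OF ti]) auto
  then show "norm (u2 s) \<le> C_u2 * t j powr (\<sigma> - 2)" "norm (u3 s) \<le> C_u3 * t j powr (\<sigma> - 3)"
    using derivative_bounds(2,3)[OF s_range] M_nonneg unfolding C_u2_def C_u3_def
    by (metis mult.assoc mult_left_mono order_trans)+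
qed

(* The leading term vanishes on I_1, where u'' may be unbounded: there the whole defect is remainder. *)

definition defect_lead :: "nat \<Rightarrow> 'a" where
  "defect_lead j = (if j \<ge> 2 then ((t j - t (j - 1))\<^sup>2 / 12) *\<^sub>R u2 (t (j - 1)) else 0)"

definition defect_rem :: "nat \<Rightarrow> 'a" where
  "defect_rem j = trapezoid_defect j - defect_lead j"

lemma defect_lead_le:
  assumes j: "2 \<le> j" "j \<le> N"
  shows "norm (defect_lead j) \<le> C_lead * (t j powr \<sigma> / real j ^ 2)"
proof -
  define h where "h = t j - t (j - 1)"
  have h: "0 < h" "h \<le> \<gamma> * t j / real j"
    using t_less[of "j - 1" j] t_step_le[of j j] j by (auto simp: h_def)
  have u2: "norm (u2 (t (j - 1))) \<le> C_u2 * t j powr (\<sigma> - 2)"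
    using j t_le[of "j - 1" j] by (intro local_derivative_bounds(1)[of "j - 1"]) auto
  have "norm (defect_lead j) = h\<^sup>2 / 12 * norm (u2 (t (j - 1)))"
    using j by (simp add: defect_lead_def h_def)
  also have "\<dots> \<le> (\<gamma> * t j / real j)\<^sup>2 / 12 * (C_u2 * t j powr (\<sigma> - 2))"
    using h u2 by (intro mult_mono divide_right_mono power_mono) auto
  also have "\<dots> = \<gamma>\<^sup>2 * C_u2 / 12 * ((t j)\<^sup>2 * t j powr (\<sigma> - 2)) / real j ^ 2"
    by (simp add: power_divide power_mult_distrib mult_ac)
  also have "\<dots> = C_lead * (t j powr \<sigma> / real j ^ 2)"
    using power_mult_powr_diff[OF t_pos, of j 2 \<sigma>] j by (simp add: C_lead_def)
  finally show ?thesis .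
qed

lemma defect_rem_le:
  assumes j: "2 \<le> j" "j \<le> N"
  shows "norm (defect_rem j) \<le> C_rem * (t j powr \<sigma> / real j ^ 3)"
proof -
  define a b where "a = t (j - 1)" and "b = t j"
  have ab: "a < b" "0 < a" "b \<le> T" "b - a \<le> \<gamma> * t j / real j"
    using t_less[of "j - 1" j] t_pos[of "j - 1"] t_le_T[of j] t_step_le[of j j] j
    by (auto simp: a_def b_def)
  have u3: "norm (u3 s) \<le> C_u3 * t j powr (\<sigma> - 3)" if "s \<in> {a..b}" for s
    using j that by (intro local_derivative_bounds(2)[of "j - 1"]) (auto simp: a_def b_def)
  note derivs = derivatives_within_subinterval[OF ab(2,3)]
  have "norm (defect_rem j)
      = norm ((1 / 2) *\<^sub>R (u a + u b) - (1 / (b - a)) *\<^sub>R integral {a..b} u - ((b - a)\<^sup>2 / 12) *\<^sub>R u2 a)"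
    using j by (simp add: defect_rem_def defect_lead_def trapezoid_defect_def a_def b_def)
  also have "\<dots> \<le> 3 / 2 * (C_u3 * t j powr (\<sigma> - 3)) * (b - a) ^ 3"
    by (rule trapezoid_error_expansion[OF ab(1) derivs u3])
  also have "\<dots> \<le> 3 / 2 * (C_u3 * t j powr (\<sigma> - 3)) * (\<gamma> * t j / real j) ^ 3"
    using ab constants_nonneg(3) by (intro mult_left_mono power_mono) auto
  also have "\<dots> = 3 / 2 * C_u3 * \<gamma> ^ 3 * ((t j) ^ 3 * t j powr (\<sigma> - 3)) / real j ^ 3"
    by (simp add: power_divide power_mult_distrib mult_ac)
  also have "\<dots> = C_rem * (t j powr \<sigma> / real j ^ 3)"
    using power_mult_powr_diff[OF t_pos, of j 3 \<sigma>] j by (simp add: C_rem_def)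
  finally show ?thesis .
qed

lemma defect_rem_1_le: "norm (defect_rem 1) \<le> C_start * \<tau> powr p"
proof -
  define b where "b = t 1"
  have b: "0 < b" "b \<le> T" "b powr \<sigma> = \<tau> powr p"
    using t_pos[of 1] t_le_T[of 1] N t_powr_sigma_div_power[of 1 0] by (auto simp: b_def)
  have osc: "norm (u x - u y) \<le> C_start * \<tau> powr p" if "x \<in> {0..b}" "y \<in> {0..b}" for x y
    using norm_diff_initial_le[OF that b(2)] b(3) by (simp add: C_start_def)
  have "norm ((1 / 2) *\<^sub>R (u 0 + u b) - u x) \<le> C_start * \<tau> powr p" if x: "x \<in> {0..b}" for x
  proof -
    have "(1 / 2) *\<^sub>R (u 0 + u b) - u x = (1 / 2) *\<^sub>R (u 0 - u x) + (1 / 2) *\<^sub>R (u b - u x)"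
      by (simp add: algebra_simps flip: scaleR_add_right)
    also have "norm \<dots> \<le> (1 / 2) * norm (u 0 - u x) + (1 / 2) * norm (u b - u x)"
      by (rule order_trans[OF norm_triangle_ineq]) simp
    also have "\<dots> \<le> (1 / 2) * (C_start * \<tau> powr p) + (1 / 2) * (C_start * \<tau> powr p)"
      using osc[of 0 x] osc[of b x] x b by (intro add_mono mult_left_mono) auto
    finally show ?thesis by simp
  qed
  moreover have "continuous_on {0..b} u"
    using b by (intro continuous_on_subset[OF cont]) auto
  ultimately have "norm ((1 / 2) *\<^sub>R (u 0 + u b) - (1 / (b - 0)) *\<^sub>R integral {0..b} u) \<le> C_start * \<tau> powr p"
    using b by (intro norm_minus_average_le) auto
  then show ?thesis
    by (simp add: defect_rem_def defect_lead_def trapezoid_defect_def b_def t_0)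
qed

lemma defect_lead_incr_le:
  assumes j: "3 \<le> j" "j \<le> N"
  shows "norm (defect_lead j - defect_lead (j - 1)) \<le> C_lead_incr * (t j powr \<sigma> / real j ^ 3)"
proof -
  define H where "H = \<gamma> * t j / real j"
  define h h' where "h = t j - t (j - 1)" and "h' = t (j - 1) - t (j - 2)"
  define A B where "A = u2 (t (j - 1))" and "B = u2 (t (j - 2))"
  have j_pred: "j - 1 - 1 = j - 2" by simp
  have h: "0 < h" "h \<le> H"
    using t_less[of "j - 1" j] t_step_le[of j j] j by (auto simp: h_def H_def)
  have h': "0 < h'" "h' \<le> H"
    using t_less[of "j - 2" "j - 1"] t_step_le[of "j - 1" j, unfolded j_pred] j by (auto simp: h'_def H_def)
  have lead: "defect_lead j = (h\<^sup>2 / 12) *\<^sub>R A" "defect_lead (j - 1) = (h'\<^sup>2 / 12) *\<^sub>R B"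
    using j unfolding defect_lead_def h_def h'_def A_def B_def j_pred by simp_all
  have A: "norm A \<le> C_u2 * t j powr (\<sigma> - 2)"
    unfolding A_def using j t_le[of "j - 1" j] by (intro local_derivative_bounds(1)[of "j - 1"]) auto
  have AB: "norm (A - B) \<le> C_u3 * t j powr (\<sigma> - 3) * h'"
  proof -
    have "0 < t (j - 2)" "t (j - 1) \<le> T" using t_pos[of "j - 2"] t_le_T[of "j - 1"] j by auto
    note derivs = derivatives_within_subinterval(3)[OF this]
    have "norm (u3 s) \<le> C_u3 * t j powr (\<sigma> - 3)" if "s \<in> {t (j - 2)..t (j - 1)}" for s
      using j that t_le[of "j - 1" j] by (intro local_derivative_bounds(2)[of "j - 2"]) auto
    from vector_mean_value_bound[OF derivs this, of "t (j - 1)" "t (j - 2)"]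
    show ?thesis using h' t_le[of "j - 2" "j - 1"] by (simp add: A_def B_def h'_def)
  qed
  have mesh: "\<bar>h - h'\<bar> \<le> C_mesh * t j / real j ^ 2"
    using t_second_difference_le[OF j(1)] by (simp add: h_def h'_def C_mesh_def)
  have "defect_lead j - defect_lead (j - 1) = ((h - h') * (h + h') / 12) *\<^sub>R A + (h'\<^sup>2 / 12) *\<^sub>R (A - B)"
  proof -
    have "(h - h') * (h + h') = h\<^sup>2 - h'\<^sup>2" by (simp add: power2_eq_square algebra_simps)
    then show ?thesis unfolding lead by (simp add: scaleR_diff_right scaleR_diff_left diff_divide_distrib)
  qed
  then have "norm (defect_lead j - defect_lead (j - 1)) \<le> \<bar>h - h'\<bar> * (h + h') / 12 * norm A + h'\<^sup>2 / 12 * norm (A - B)"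
    using h h' by (auto intro: order_trans[OF norm_triangle_ineq] simp: abs_mult)
  also have "\<dots> \<le> C_mesh * t j / real j ^ 2 * (2 * H) / 12 * (C_u2 * t j powr (\<sigma> - 2))
                 + H\<^sup>2 / 12 * (C_u3 * t j powr (\<sigma> - 3) * H)"
  proof (rule add_mono)
    show "\<bar>h - h'\<bar> * (h + h') / 12 * norm A \<le> C_mesh * t j / real j ^ 2 * (2 * H) / 12 * (C_u2 * t j powr (\<sigma> - 2))"
      using mesh h h' A constants_nonneg(4) t_pos[of j] j
      by (intro mult_mono divide_right_mono) auto
    show "h'\<^sup>2 / 12 * norm (A - B) \<le> H\<^sup>2 / 12 * (C_u3 * t j powr (\<sigma> - 3) * H)"
      using h' AB constants_nonneg(3)
      by (intro mult_mono divide_right_mono power_mono order_trans[OF AB]) auto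
  qed
  also have "\<dots> = C_lead_incr * (t j powr \<sigma> / real j ^ 3)"
    using power_mult_powr_diff[OF t_pos, of j 2 \<sigma>] power_mult_powr_diff[OF t_pos, of j 3 \<sigma>] j
    by (simp add: H_def C_lead_incr_def field_simps power2_eq_square power3_eq_cube)
  finally show ?thesis .
qed

lemma defect_increment_le:
  assumes j: "1 \<le> j" "j \<le> N"
  shows "norm (defect_lead j - defect_lead (j - 1)) + 2 * norm (defect_rem j)
           \<le> C_incr * (\<tau> powr p * real j powr (p - 2 - 1))"
proof -
  note C = constants_nonneg
  consider "j = 1" | "j = 2" | "j \<ge> 3" using j by linarith
  then show ?thesis
  proof cases
    case 1
    then have "norm (defect_lead j - defect_lead (j - 1)) + 2 * norm (defect_rem j) \<le> 2 * C_start * \<tau> powr p"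
      using defect_rem_1_le by (simp add: defect_lead_def)
    also have "\<dots> \<le> C_incr * \<tau> powr p"
      using C by (intro mult_right_mono) (auto simp: C_incr_def)
    finally show ?thesis using 1 by simp
  next
    case 2
    have "norm (defect_lead 2) \<le> C_lead * (\<tau> powr p * 2 * 2 powr (p - 3))"
      using defect_lead_le[of 2] t_powr_sigma_div_power[of 2 2] j 2
      by (simp add: powr_diff mult_ac)
    moreover have "norm (defect_rem 2) \<le> C_rem * (\<tau> powr p * 2 powr (p - 3))"
      using defect_rem_le[of 2] t_powr_sigma_div_power[of 2 3] j 2 by simp
    ultimately have "norm (defect_lead 2 - defect_lead 1) + 2 * norm (defect_rem 2)
        \<le> (2 * C_lead + 2 * C_rem) * (\<tau> powr p * 2 powr (p - 3))"
      by (simp add: defect_lead_def algebra_simps)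
    also have "\<dots> \<le> C_incr * (\<tau> powr p * 2 powr (p - 3))"
      using C by (intro mult_right_mono) (auto simp: C_incr_def)
    finally show ?thesis using 2 by (simp add: diff_diff_eq)
  next
    case 3
    have "norm (defect_lead j - defect_lead (j - 1)) + 2 * norm (defect_rem j)
        \<le> C_lead_incr * (t j powr \<sigma> / real j ^ 3) + 2 * (C_rem * (t j powr \<sigma> / real j ^ 3))"
      using defect_lead_incr_le[OF 3 j(2)] defect_rem_le[of j] 3 j by (intro add_mono) auto
    also have "\<dots> = (C_lead_incr + 2 * C_rem) * (\<tau> powr p * real j powr (p - 3))"
      using t_powr_sigma_div_power[of j 3] j by (simp add: algebra_simps)
    also have "\<dots> \<le> C_incr * (\<tau> powr p * real j powr (p - 3))"
      using C by (intro mult_right_mono) (auto simp: C_incr_def)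
    finally show ?thesis by (simp add: diff_diff_eq)
  qed
qed

lemma node_error_le:
  assumes k: "k \<le> n" "1 \<le> n" "n \<le> N"
  shows "norm (node_error k) \<le> (C_incr * C_sum + C_lead) * (\<tau> powr p * power_sum_growth (p - 2) n)"
proof (cases "k = 0")
  case True
  then show ?thesis
    using node_error_0 constants_nonneg C_sum(1) power_sum_growth_ge_1[of n "p - 2"] k by simp
next
  case False
  then have k1: "1 \<le> k" by simp
  have "norm (node_error k - defect_lead k) \<le> (\<Sum>j=1..k. C_incr * (\<tau> powr p * real j powr (p - 2 - 1)))"
  proof (rule alternating_recursion_bound[where r = defect_rem])
    show "node_error 0 = 0" "defect_lead 0 = 0" by (simp_all add: node_error_0 defect_lead_def)
    fix j assume j: "1 \<le> j" "j \<le> k"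
    then show "node_error j + node_error (j - 1) = 2 *\<^sub>R (defect_lead j + defect_rem j)"
      using node_error_recursion[of j] k by (simp add: defect_rem_def)
    show "norm (defect_lead j - defect_lead (j - 1)) + 2 * norm (defect_rem j)
        \<le> C_incr * (\<tau> powr p * real j powr (p - 2 - 1))"
      using j k by (intro defect_increment_le) auto
  qed
  also have "\<dots> = C_incr * \<tau> powr p * (\<Sum>j=1..k. real j powr (p - 2 - 1))"
    by (simp add: sum_distrib_left mult.assoc)
  also have "\<dots> \<le> C_incr * \<tau> powr p * (C_sum * power_sum_growth (p - 2) k)"
    using C_sum(2)[OF k1] constants_nonneg by (intro mult_left_mono) auto
  finally have rest: "norm (node_error k - defect_lead k) \<le> C_incr * C_sum * (\<tau> powr p * power_sum_growth (p - 2) k)"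
    by (simp add: mult_ac)
  have lead: "norm (defect_lead k) \<le> C_lead * (\<tau> powr p * power_sum_growth (p - 2) k)"
  proof (cases "k = 1")
    case True
    then show ?thesis
      using constants_nonneg power_sum_growth_ge_1[of k "p - 2"] by (simp add: defect_lead_def)
  next
    case False
    then have "norm (defect_lead k) \<le> C_lead * (t k powr \<sigma> / real k ^ 2)"
      using k1 k by (intro defect_lead_le) auto
    also have "\<dots> \<le> C_lead * (\<tau> powr p * power_sum_growth (p - 2) k)"
      using t_powr_sigma_div_power[of k 2] powr_le_power_sum_growth[of k "p - 2"] k1 constants_nonneg
      by (auto intro!: mult_left_mono)
    finally show ?thesis .
  qed
  have "norm (node_error k) \<le> (C_incr * C_sum + C_lead) * (\<tau> powr p * power_sum_growth (p - 2) k)"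
    using norm_triangle_ineq[of "node_error k - defect_lead k" "defect_lead k"] rest lead
    by (simp add: algebra_simps)
  also have "\<dots> \<le> (C_incr * C_sum + C_lead) * (\<tau> powr p * power_sum_growth (p - 2) n)"
    using power_sum_growth_mono[OF k1 k(1)] constants_nonneg C_sum(1) by (intro mult_left_mono) auto
  finally show ?thesis .
qed

lemma interpolation_error_le:
  assumes n: "n \<in> {1..N}" and s: "s \<in> {t (n - 1)..t n}"
  shows "norm (u s - (((t n - s) / (t n - t (n - 1))) *\<^sub>R u (t (n - 1)) + ((s - t (n - 1)) / (t n - t (n - 1))) *\<^sub>R u (t n)))
           \<le> C_interp * (\<tau> powr p * power_sum_growth (p - 2) n)"
    (is "norm (u s - ?interp) \<le> _")
proof -
  define a b where "a = t (n - 1)" and "b = t n"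
  have ab: "a < b" "s \<in> {a..b}" "b \<le> T" using t_less[of "n - 1" n] t_le_T[of n] n s by (auto simp: a_def b_def)
  have growth: "1 \<le> power_sum_growth (p - 2) n" using power_sum_growth_ge_1 n by simp
  show ?thesis
  proof (cases "n = 1")
    case True
    then have "a = 0" "b powr \<sigma> = \<tau> powr p"
      using t_powr_sigma_div_power[of 1 0] by (simp_all add: a_def b_def t_0)
    then have "norm (u s - ?interp) \<le> max (norm (u s - u a)) (norm (u s - u b))"
      unfolding a_def[symmetric] b_def[symmetric]
      using norm_convex_comb_le_max[OF interval_weights[OF ab(1,2)], of "u s - u a" "u s - u b"]
        interval_weights[OF ab(1,2)]
      by (simp add: algebra_simps flip: scaleR_add_left)
    also have "\<dots> \<le> C_start * \<tau> powr p"
      using norm_diff_initial_le[of s b a] norm_diff_initial_le[of s b b] ab \<open>a = 0\<close> \<open>b powr \<sigma> = \<tau> powr p\<close>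
      by (auto simp: C_start_def)
    also have "\<dots> \<le> C_interp * (\<tau> powr p * power_sum_growth (p - 2) n)"
      using constants_nonneg growth
      by (intro mult_mono) (auto simp: C_interp_def intro: order_trans[OF _ mult_left_mono[OF growth]])
    finally show ?thesis .
  next
    case False
    then have n2: "2 \<le> n" using n by simp
    have a: "0 < a" using t_pos[of "n - 1"] n2 by (simp add: a_def)
    have u2: "norm (u2 x) \<le> C_u2 * t n powr (\<sigma> - 2)" if "x \<in> {a..b}" for x
      using n2 n that by (intro local_derivative_bounds(1)[of "n - 1"]) (auto simp: a_def b_def)
    have "norm (u s - ?interp) \<le> C_u2 * t n powr (\<sigma> - 2) * (b - a)\<^sup>2"
      using linear_interpolation_error_le[OF ab(1,2) derivatives_within_subinterval(1,2)[OF a ab(3)] u2]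
      by (simp add: a_def b_def)
    also have "\<dots> \<le> C_u2 * t n powr (\<sigma> - 2) * (\<gamma> * t n / real n)\<^sup>2"
      using t_step_le[of n n] n ab constants_nonneg by (intro mult_left_mono power_mono) (auto simp: a_def b_def)
    also have "\<dots> = C_u2 * \<gamma>\<^sup>2 * (\<tau> powr p * real n powr (p - 2))"
      using power_mult_powr_diff[OF t_pos, of n 2 \<sigma>] t_powr_sigma_div_power[of n 2] n
      by (simp add: power_divide power_mult_distrib field_simps)
    also have "\<dots> \<le> C_interp * (\<tau> powr p * power_sum_growth (p - 2) n)"
      using powr_le_power_sum_growth[of n "p - 2"] n constants_nonneg
      by (intro mult_mono) (auto simp: C_interp_def)
    finally show ?thesis .
  qed
qed

lemma psi_le:
  assumes n: "n \<in> {1..N}" and s: "s \<in> {t (n - 1)..t n}"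
  shows "norm (u s - uh s) \<le> C_psi * (\<tau> powr p * power_sum_growth (p - 2) n)"
proof -
  define a b where "a = t (n - 1)" and "b = t n"
  define l m where "l = (b - s) / (b - a)" and "m = (s - a) / (b - a)"
  have ab: "a < b" "s \<in> {a..b}" using t_less[of "n - 1" n] n s by (auto simp: a_def b_def)
  have lm: "0 \<le> l" "0 \<le> m" "l + m = 1" using interval_weights[OF ab] by (simp_all add: l_def m_def)
  have "u s - uh s = (u s - (l *\<^sub>R u a + m *\<^sub>R u b)) + (l *\<^sub>R node_error (n - 1) + m *\<^sub>R node_error n)"
    using uh_linear[OF n s] by (simp add: node_error_def a_def b_def l_def m_def algebra_simps)
  then have "norm (u s - uh s) \<le> norm (u s - (l *\<^sub>R u a + m *\<^sub>R u b)) + norm (l *\<^sub>R node_error (n - 1) + m *\<^sub>R node_error n)"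
    by (metis norm_triangle_ineq)
  also have "\<dots> \<le> C_interp * (\<tau> powr p * power_sum_growth (p - 2) n)
      + (C_incr * C_sum + C_lead) * (\<tau> powr p * power_sum_growth (p - 2) n)"
  proof (rule add_mono)
    show "norm (u s - (l *\<^sub>R u a + m *\<^sub>R u b)) \<le> C_interp * (\<tau> powr p * power_sum_growth (p - 2) n)"
      using interpolation_error_le[OF n s] by (simp add: a_def b_def l_def m_def)
    have "norm (l *\<^sub>R node_error (n - 1) + m *\<^sub>R node_error n) \<le> max (norm (node_error (n - 1))) (norm (node_error n))"
      by (rule norm_convex_comb_le_max[OF lm])
    also have "\<dots> \<le> (C_incr * C_sum + C_lead) * (\<tau> powr p * power_sum_growth (p - 2) n)"
      using node_error_le[of "n - 1" n] node_error_le[of n n] n by simp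
    finally show "norm (l *\<^sub>R node_error (n - 1) + m *\<^sub>R node_error n)
        \<le> (C_incr * C_sum + C_lead) * (\<tau> powr p * power_sum_growth (p - 2) n)" .
  qed
  finally show ?thesis by (simp add: C_psi_def algebra_simps)
qed

lemma growth_le_rate:
  assumes n: "n \<in> {1..N}"
  shows "\<tau> powr p * power_sum_growth (p - 2) n
           \<le> (if \<gamma> = 2 / \<sigma> then \<tau>\<^sup>2 * (1 + ln (t n / t 1))
              else \<tau> powr (min (\<gamma> * \<sigma>) 2) * t n powr (max 0 (\<sigma> - 2 / \<gamma>)))"
proof -
  have n1: "real n \<ge> 1" using n by simp
  have \<gamma>_pos: "\<gamma> > 0" using \<gamma> by simp
  consider "p = 2" | "p < 2" | "p > 2" by linarith
  then show ?thesis
  proof cases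
    case 1
    then have crit: "\<gamma> = 2 / \<sigma>" using \<sigma> by (simp add: p_def field_simps)
    have "ln (t n / t 1) = \<gamma> * ln (real n)"
      using tau_pos n1 by (simp add: t_eq ln_powr)
    moreover have "ln (real n) \<le> \<gamma> * ln (real n)"
      using mult_right_mono[OF \<gamma>, of "ln (real n)"] n1 by simp
    ultimately show ?thesis
      using crit 1 tau_pos by (simp add: power_sum_growth_def powr_numeral)
  next
    case 2
    then have "\<gamma> \<noteq> 2 / \<sigma>" "\<sigma> - 2 / \<gamma> < 0" using \<sigma> \<gamma>_pos by (auto simp: p_def field_simps)
    then show ?thesis using 2 t_pos[of n] n by (simp add: power_sum_growth_def p_def min_def max_def)
  next
    case 3
    then have "\<gamma> \<noteq> 2 / \<sigma>" "\<sigma> - 2 / \<gamma> > 0" using \<sigma> \<gamma>_pos by (auto simp: p_def field_simps)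
    have "t n powr (\<sigma> - 2 / \<gamma>) = real n powr (p - 2) * \<tau> powr (p - 2)"
      using \<gamma>_pos tau_pos by (simp add: t_eq powr_mult powr_powr p_def algebra_simps)
    moreover have "\<tau> powr p = \<tau> powr 2 * \<tau> powr (p - 2)" by (simp flip: powr_add)
    ultimately show ?thesis
      using 3 \<open>\<gamma> \<noteq> 2 / \<sigma>\<close> \<open>\<sigma> - 2 / \<gamma> > 0\<close> by (simp add: power_sum_growth_def p_def min_def max_def)
  qed
qed

lemma error_bound_on_interval:
  assumes n: "n \<in> {1..N}"
  shows "norm (u (t n) - uh (t n)) \<le> (SUP s\<in>{t (n - 1)<..<t n}. norm (u s - uh s)) \<and>
         (SUP s\<in>{t (n - 1)<..<t n}. norm (u s - uh s))
           \<le> C_psi * (if \<gamma> = 2 / \<sigma> then \<tau>\<^sup>2 * (1 + ln (t n / t 1))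
                      else \<tau> powr (min (\<gamma> * \<sigma>) 2) * t n powr (max 0 (\<sigma> - 2 / \<gamma>)))"
    (is "_ \<le> ?sup \<and> _ \<le> ?bound")
proof -
  define err where "err s = norm (u s - uh s)" for s
  have ab: "t (n - 1) < t n" "{t (n - 1)..t n} \<subseteq> {0..T}"
    using t_less[of "n - 1" n] t_le_T[of n] t_0 t_le[of 0 "n - 1"] n by auto
  have le_bound: "err s \<le> ?bound" if "s \<in> {t (n - 1)<..<t n}" for s
  proof -
    have "err s \<le> C_psi * (\<tau> powr p * power_sum_growth (p - 2) n)"
      using psi_le[OF n, of s] that by (simp add: err_def)
    also have "\<dots> \<le> ?bound"
      using growth_le_rate[OF n] constants_nonneg(10) by (rule mult_left_mono)
    finally show ?thesis .
  qed
  then have sup_le: "(SUP s\<in>{t (n - 1)<..<t n}. err s) \<le> ?bound"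
    using ab(1) by (intro cSUP_least) simp_all
  have cont_err: "continuous_on {t (n - 1)..t n} err"
    using continuous_on_subset[OF cont ab(2)] continuous_on_subset[OF uh_cont ab(2)]
    unfolding err_def by (intro continuous_on_norm continuous_on_diff)
  have bdd: "bdd_above (err ` {t (n - 1)<..<t n})"
    using le_bound by (rule bdd_aboveI2)
  have "err (t n) \<le> (SUP s\<in>{t (n - 1)<..<t n}. err s)"
  proof (rule le_at_endpoint_if_le_on_interior[OF ab(1) cont_err])
    show "err s \<le> (SUP s\<in>{t (n - 1)<..<t n}. err s)" if "s \<in> {t (n - 1)<..<t n}" for s
      using that bdd by (rule cSUP_upper)
  qed
  with sup_le show ?thesis
    unfolding err_def by (rule conjI[rotated])
qed

end

theorem corollary3p3:
  fixes u u1 u2 u3 :: "real \<Rightarrow> 'a::{real_inner, complete_space}"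
    and T \<sigma> \<gamma> M :: real
  assumes T: "T > 0" and sigma: "\<sigma> > 0" and gamma: "\<gamma> \<ge> 1"
    and cont: "continuous_on {0..T} u"
    and d1: "\<And>s. s \<in> {0<..T} \<Longrightarrow> (u has_vector_derivative u1 s) (at s within {0..T})"
    and d2: "\<And>s. s \<in> {0<..T} \<Longrightarrow> (u1 has_vector_derivative u2 s) (at s within {0..T})"
    and d3: "\<And>s. s \<in> {0<..T} \<Longrightarrow> (u2 has_vector_derivative u3 s) (at s within {0..T})"
    and reg: "\<And>s. s \<in> {0<..T} \<Longrightarrow>
               s * norm (u1 s) + s\<^sup>2 * norm (u2 s) + s ^ 3 * norm (u3 s) \<le> M * s powr \<sigma>"
  shows "\<exists>C::real. \<forall>(N::nat) (uh::real \<Rightarrow> 'a) (n::nat).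
           N \<ge> 1 \<longrightarrow> is_avg_interp u (mesh T \<gamma> N) N uh \<longrightarrow> n \<in> {1..N} \<longrightarrow>
           norm (u (mesh T \<gamma> N n) - uh (mesh T \<gamma> N n))
             \<le> (SUP s\<in>{mesh T \<gamma> N (n-1) <..< mesh T \<gamma> N n}. norm (u s - uh s)) \<and>
           (SUP s\<in>{mesh T \<gamma> N (n-1) <..< mesh T \<gamma> N n}. norm (u s - uh s))
             \<le> C * (if \<gamma> = 2 / \<sigma>
                     then (tstep T \<gamma> N)\<^sup>2 * (1 + ln (mesh T \<gamma> N n / mesh T \<gamma> N 1))
                     else tstep T \<gamma> N powr (min (\<gamma> * \<sigma>) 2)
                          * mesh T \<gamma> N n powr (max 0 (\<sigma> - 2 / \<gamma>)))"
proof -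
  interpret regular_solution u u1 u2 u3 T \<sigma> \<gamma> M
    by unfold_locales (fact T sigma gamma cont d1 d2 d3 reg)+
  have mesh: "avg_interp_on_graded_mesh u u1 u2 u3 T \<sigma> \<gamma> M N uh"
    if "N \<ge> 1" "is_avg_interp u (mesh T \<gamma> N) N uh" for N uh
    using that by unfold_locales
  show ?thesis
    by (intro exI[of _ C_psi] allI impI avg_interp_on_graded_mesh.error_bound_on_interval[OF mesh]) assumption+
qed

end
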